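(* Let $(X,Y)$ be distributed according to an $(\alpha,\lambda)$-locally consistent RBM with $\alpha>0$. Fix an observed node $u\in V_{obs}$, a subset $S\subseteq V_{obs}\setminus\{u\}$, and a configuration $x_S\in\{\pm1\}^{S}$. Then for every $v\in N_2(u)\setminus(S\cup\{u\})$, \[ \mathrm{Cov}(u,v\mid X_S=x_S)\;\ge\;\alpha^2 e^{-12\lambda}. \]
   Context: A Restricted Boltzmann Machine (RBM) with $n$ observed variables $X\in\{\pm1\}^n$ (indexed by $V_{obs}=[n]$) and $m$ latent variables $Y\in\{\pm1\}^m$ (indexed by $V_{lat}=[m]$) is the distribution $\Pr[X=x,Y=y]=\frac1Z\exp(x^TJy+h^Tx+g^Ty)$, where $J\in\mathbb R^{n\times m}$, $h\in\mathbb R^n$, $g\in\mathbb R^m$ are arbitrary (no sign constraints on $h,g$) and $Z$ is the normalizing constant. Its edge set is $E=\{(i,j):J_{ij}\neq0\}$. The RBM is $(\alpha,\lambda)$-locally consistent if: (i) for each $j\in[m]$, either $J_{ij}\ge0$ for all $i$ or $J_{ij}\le0$ for all $i$; (ii) $|J_{ij}|\ge\alpha$ for every $(i,j)\in E$; (iii) $\sum_j|J_{ij}|+|h_i|\le\lambda$ for all $i\in[n]$; (iv) $\sum_i|J_{ij}|+|g_j|\le\lambda$ for all $j\in[m]$. For an observed node $u$, $N_2(u)=\{i\in V_{obs}:\exists j\in[m],\ J_{ij}\ne0,\ J_{uj}\neq0\}$ (two-hop neighborhood). For observed $u,v$ and $S\subseteq V_{obs}\setminus\{u,v\}$ with configuration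 $x_S$ of positive probability, $\mathrm{Cov}(u,v\mid X_S=x_S)=\mathbb E[X_uX_v\mid X_S=x_S]-\mathbb E[X_u\mid X_S=x_S]\,\mathbb E[X_v\mid X_S=x_S]$. *)

theory Defs
  imports Main "HOL-Library.FuncSet" Complex_Main
begin

text \<open>RBM with n observed nodes 0..<n and m latent nodes 0..<m.
  Configurations are extensional functions on the index sets with values in {-1,1}.\<close>

definition spins :: "nat \<Rightarrow> (nat \<Rightarrow> real) set" where
  "spins k = (\<Pi>\<^sub>E i\<in>{..<k}. {-1, 1})"

definition rbm_weight ::
  "nat \<Rightarrow> nat \<Rightarrow> (nat \<Rightarrow> nat \<Rightarrow> real) \<Rightarrow> (nat \<Rightarrow> real) \<Rightarrow> (nat \<Rightarrow> real)
   \<Rightarrow> (nat \<Rightarrow> real) \<Rightarrow> (nat \<Rightarrow> real) \<Rightarrow> real" where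
  "rbm_weight n m J h g x y =
     exp ((\<Sum>i<n. \<Sum>j<m. x i * J i j * y j) + (\<Sum>i<n. h i * x i) + (\<Sum>j<m. g j * y j))"

definition rbm_Z ::
  "nat \<Rightarrow> nat \<Rightarrow> (nat \<Rightarrow> nat \<Rightarrow> real) \<Rightarrow> (nat \<Rightarrow> real) \<Rightarrow> (nat \<Rightarrow> real) \<Rightarrow> real" where
  "rbm_Z n m J h g = (\<Sum>x\<in>spins n. \<Sum>y\<in>spins m. rbm_weight n m J h g x y)"

definition rbm_prob ::
  "nat \<Rightarrow> nat \<Rightarrow> (nat \<Rightarrow> nat \<Rightarrow> real) \<Rightarrow> (nat \<Rightarrow> real) \<Rightarrow> (nat \<Rightarrow> real)
   \<Rightarrow> (nat \<Rightarrow> real) \<Rightarrow> (nat \<Rightarrow> real) \<Rightarrow> real" where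
  "rbm_prob n m J h g x y = rbm_weight n m J h g x y / rbm_Z n m J h g"

definition rbm_cond_exp ::
  "nat \<Rightarrow> nat \<Rightarrow> (nat \<Rightarrow> nat \<Rightarrow> real) \<Rightarrow> (nat \<Rightarrow> real) \<Rightarrow> (nat \<Rightarrow> real)
   \<Rightarrow> nat set \<Rightarrow> (nat \<Rightarrow> real) \<Rightarrow> ((nat \<Rightarrow> real) \<Rightarrow> real) \<Rightarrow> real" where
  "rbm_cond_exp n m J h g S xS f =
     (\<Sum>x\<in>{x\<in>spins n. \<forall>i\<in>S. x i = xS i}. \<Sum>y\<in>spins m. f x * rbm_prob n m J h g x y)
     / (\<Sum>x\<in>{x\<in>spins n. \<forall>i\<in>S. x i = xS i}. \<Sum>y\<in>spins m. rbm_prob n m J h g x y)"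

definition rbm_cond_cov ::
  "nat \<Rightarrow> nat \<Rightarrow> (nat \<Rightarrow> nat \<Rightarrow> real) \<Rightarrow> (nat \<Rightarrow> real) \<Rightarrow> (nat \<Rightarrow> real)
   \<Rightarrow> nat set \<Rightarrow> (nat \<Rightarrow> real) \<Rightarrow> nat \<Rightarrow> nat \<Rightarrow> real" where
  "rbm_cond_cov n m J h g S xS u v =
     rbm_cond_exp n m J h g S xS (\<lambda>x. x u * x v)
     - rbm_cond_exp n m J h g S xS (\<lambda>x. x u) * rbm_cond_exp n m J h g S xS (\<lambda>x. x v)"

definition locally_consistent ::
  "nat \<Rightarrow> nat \<Rightarrow> (nat \<Rightarrow> nat \<Rightarrow> real) \<Rightarrow> (nat \<Rightarrow> real) \<Rightarrow> (nat \<Rightarrow> real)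
   \<Rightarrow> real \<Rightarrow> real \<Rightarrow> bool" where
  "locally_consistent n m J h g a lam \<longleftrightarrow>
     (\<forall>j<m. (\<forall>i<n. J i j \<ge> 0) \<or> (\<forall>i<n. J i j \<le> 0)) \<and>
     (\<forall>i<n. \<forall>j<m. J i j \<noteq> 0 \<longrightarrow> \<bar>J i j\<bar> \<ge> a) \<and>
     (\<forall>i<n. (\<Sum>j<m. \<bar>J i j\<bar>) + \<bar>h i\<bar> \<le> lam) \<and>
     (\<forall>j<m. (\<Sum>i<n. \<bar>J i j\<bar>) + \<bar>g j\<bar> \<le> lam)"

definition two_hop :: "nat \<Rightarrow> nat \<Rightarrow> (nat \<Rightarrow> nat \<Rightarrow> real) \<Rightarrow> nat \<Rightarrow> nat set" where
  "two_hop n m J u = {i. i < n \<and> (\<exists>j<m. J i j \<noteq> 0 \<and> J u j \<noteq> 0)}"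

end

theory Submission
  imports Defs
begin

text \<open>Flipping every latent spin whose column of \<open>J\<close> is nonpositive makes all couplings
  nonnegative. Encoding a configuration of the free spins by the set of sites carrying spin \<open>+1\<close>,
  the conditional law given \<open>X\<^sub>S = x\<^sub>S\<close> becomes a log-supermodular weight on a Boolean lattice.
  Pick a latent \<open>j\<close> adjacent to both \<open>u\<close> and \<open>v\<close>. Summing out \<open>u\<close>, \<open>v\<close> and then \<open>j\<close> bounds
  the covariance of the spins at \<open>u\<close> and \<open>v\<close> from below by a covariance that is nonnegative by
  FKG plus the average, over the remaining sites, of the covariance of their conditional means given the
  spin at \<open>j\<close>. As \<open>u\<close> and \<open>v\<close> interact only through latent spins, each conditional mean is
  \<open>(r - 1) / (r + 1)\<close> for a likelihood ratio \<open>r\<close> that flipping \<open>j\<close> multiplies by at least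
  \<open>e\<^sup>4\<^sup>\<alpha>\<close>; since every single flip changes the energy by at most \<open>2\<lambda>\<close>, the averaged term
  is at least \<open>\<alpha>\<^sup>2 e\<^sup>-\<^sup>1\<^sup>2\<^sup>\<lambda>\<close> times the squared total mass.\<close>

section \<open>The FKG inequality on a Boolean lattice\<close>

definition marginal :: "('a set \<Rightarrow> real) \<Rightarrow> 'a \<Rightarrow> 'a set \<Rightarrow> real" where
  "marginal \<mu> k A = \<mu> A + \<mu> (insert k A)"

definition cond_mean :: "('a set \<Rightarrow> real) \<Rightarrow> 'a \<Rightarrow> ('a set \<Rightarrow> real) \<Rightarrow> 'a set \<Rightarrow> real" where
  "cond_mean \<mu> k f A = (\<mu> A * f A + \<mu> (insert k A) * f (insert k A)) / marginal \<mu> k A"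

definition cov_sum :: "('a set \<Rightarrow> real) \<Rightarrow> 'a set \<Rightarrow> ('a set \<Rightarrow> real) \<Rightarrow> ('a set \<Rightarrow> real) \<Rightarrow> real" where
  "cov_sum \<mu> I f g = (\<Sum>A\<in>Pow I. \<mu> A) * (\<Sum>A\<in>Pow I. \<mu> A * f A * g A)
     - (\<Sum>A\<in>Pow I. \<mu> A * f A) * (\<Sum>A\<in>Pow I. \<mu> A * g A)"

definition positive_on :: "'a set \<Rightarrow> ('a set \<Rightarrow> real) \<Rightarrow> bool" where
  "positive_on I \<mu> \<longleftrightarrow> (\<forall>A\<subseteq>I. \<mu> A > 0)"

definition log_supermodular_on :: "'a set \<Rightarrow> ('a set \<Rightarrow> real) \<Rightarrow> bool" where
  "log_supermodular_on I \<mu> \<longleftrightarrow>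
     (\<forall>A B. A \<subseteq> I \<longrightarrow> B \<subseteq> I \<longrightarrow> \<mu> A * \<mu> B \<le> \<mu> (A \<union> B) * \<mu> (A \<inter> B))"

lemma log_supermodular_on_exp:
  assumes "\<And>A B. E A + E B \<le> E (A \<union> B) + E (A \<inter> B)"
  shows "log_supermodular_on I (\<lambda>A. exp (E A))"
  unfolding log_supermodular_on_def using assms by (simp flip: exp_add)

lemma sum_Pow_insert:
  assumes "finite I" "k \<notin> I"
  shows "(\<Sum>A\<in>Pow (insert k I). \<phi> A) = (\<Sum>A\<in>Pow I. \<phi> A + \<phi> (insert k A))"
proof -
  have inj: "inj_on (insert k) (Pow I)"
    using assms(2) by (auto simp: inj_on_def)
  have "(\<Sum>A\<in>Pow (insert k I). \<phi> A) = (\<Sum>A\<in>Pow I. \<phi> A) + (\<Sum>A\<in>insert k ` Pow I. \<phi> A)"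
    unfolding Pow_insert using assms by (intro sum.union_disjoint) auto
  also have "(\<Sum>A\<in>insert k ` Pow I. \<phi> A) = (\<Sum>A\<in>Pow I. \<phi> (insert k A))"
    using sum.reindex[OF inj] by simp
  finally show ?thesis by (simp add: sum.distrib)
qed

lemma positive_on_marginal:
  assumes "positive_on (insert k I) \<mu>"
  shows "positive_on I (marginal \<mu> k)"
  using assms unfolding positive_on_def marginal_def
  by (metis add_pos_pos insert_mono subset_insertI2)

lemma two_point_product_decomp:
  fixes a b x x' y y' :: real
  assumes "a + b > 0"
  shows "a * x * y + b * x' * y' =
    (a + b) * ((a * x + b * x') / (a + b)) * ((a * y + b * y') / (a + b))
    + a * b * (x' - x) * (y' - y) / (a + b)"
proof -
  have "(a + b) * ((a * x + b * x') / (a + b)) * ((a * y + b * y') / (a + b))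
      = (a * x + b * x') * (a * y + b * y') / (a + b)"
    using assms by simp
  moreover have "a * x * y + b * x' * y' = ((a * x + b * x') * (a * y + b * y') + a * b * (x' - x) * (y' - y)) / (a + b)"
    using assms by (simp add: field_simps)
  ultimately show ?thesis by (simp add: add_divide_distrib)
qed

text \<open>The law of total covariance for summing out \<open>k\<close>.\<close>
lemma cov_sum_peel:
  assumes "finite I" "k \<notin> I" "positive_on (insert k I) \<mu>"
  shows "cov_sum \<mu> (insert k I) f g =
    cov_sum (marginal \<mu> k) I (cond_mean \<mu> k f) (cond_mean \<mu> k g)
    + (\<Sum>A\<in>Pow I. marginal \<mu> k A) * (\<Sum>A\<in>Pow I. \<mu> A * \<mu> (insert k A)
        * (f (insert k A) - f A) * (g (insert k A) - g A) / marginal \<mu> k A)"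
proof -
  have pos: "marginal \<mu> k A > 0" if "A \<in> Pow I" for A
    using positive_on_marginal[OF assms(3)] that unfolding positive_on_def by auto
  have mean: "marginal \<mu> k A * cond_mean \<mu> k f A = \<mu> A * f A + \<mu> (insert k A) * f (insert k A)"
    if "A \<in> Pow I" for A f
    using pos[OF that] unfolding cond_mean_def by simp
  have second: "\<mu> A * f A * g A + \<mu> (insert k A) * f (insert k A) * g (insert k A) =
      marginal \<mu> k A * cond_mean \<mu> k f A * cond_mean \<mu> k g A
      + \<mu> A * \<mu> (insert k A) * (f (insert k A) - f A) * (g (insert k A) - g A) / marginal \<mu> k A"
    if "A \<in> Pow I" for A
    using two_point_product_decomp[of "\<mu> A" "\<mu> (insert k A)"] pos[OF that]
    unfolding cond_mean_def marginal_def by simp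
  have sum_mean: "(\<Sum>A\<in>Pow I. \<mu> A * f A + \<mu> (insert k A) * f (insert k A))
      = (\<Sum>A\<in>Pow I. marginal \<mu> k A * cond_mean \<mu> k f A)" for f
    using mean by (intro sum.cong) auto
  have sum_second: "(\<Sum>A\<in>Pow I. \<mu> A * f A * g A + \<mu> (insert k A) * f (insert k A) * g (insert k A))
      = (\<Sum>A\<in>Pow I. marginal \<mu> k A * cond_mean \<mu> k f A * cond_mean \<mu> k g A)
      + (\<Sum>A\<in>Pow I. \<mu> A * \<mu> (insert k A) * (f (insert k A) - f A) * (g (insert k A) - g A)
          / marginal \<mu> k A)"
    unfolding sum.distrib[symmetric] using second by (intro sum.cong) auto
  show ?thesis
    unfolding cov_sum_def sum_Pow_insert[OF assms(1,2)] sum_mean sum_second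
    by (simp add: algebra_simps flip: marginal_def)
qed

text \<open>The Ahlswede--Daykin inequality for a single element; it is what makes summing out one
  element preserve log-supermodularity.\<close>
lemma four_functions_two_point:
  fixes a b c d p q r s :: real
  assumes pos: "a > 0" "b > 0" "c > 0" "d > 0" "p > 0" "q > 0" "r > 0" "s > 0"
    and pr: "p * r \<le> a * c" and qs: "q * s \<le> b * d" and "p * s \<le> a * d" "q * r \<le> a * d"
  shows "(q + p) * (s + r) \<le> (b + a) * (d + c)"
proof -
  have "(p * r) * (q * s) \<le> (a * c) * (b * d)"
    by (rule mult_mono[OF pr qs]) (use pos in auto)
  hence cross: "(p * s) * (q * r) \<le> (a * d) * (b * c)" by (simp add: algebra_simps)
  have "0 \<le> (a * d - p * s) * (a * d - q * r)" using assms by simp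
  hence "(a * d) * (p * s + q * r) \<le> (a * d) * (a * d) + (p * s) * (q * r)" by (simp add: algebra_simps)
  also have "\<dots> \<le> (a * d) * (a * d + b * c)" using cross by (simp add: algebra_simps)
  finally have "p * s + q * r \<le> a * d + b * c" using pos by (simp add: mult_le_cancel_left)
  thus ?thesis using assms by (simp add: algebra_simps)
qed

lemma log_supermodular_on_marginal:
  assumes "k \<notin> I" "positive_on (insert k I) \<mu>" "log_supermodular_on (insert k I) \<mu>"
  shows "log_supermodular_on I (marginal \<mu> k)"
  unfolding log_supermodular_on_def
proof (intro allI impI)
  fix A B assume A: "A \<subseteq> I" and B: "B \<subseteq> I"
  have kA: "k \<notin> A" and kB: "k \<notin> B" using A B assms(1) by auto
  have pos: "\<And>C. C \<subseteq> insert k I \<Longrightarrow> \<mu> C > 0" using assms(2) unfolding positive_on_def by auto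
  have lsm: "\<And>C D. C \<subseteq> insert k I \<Longrightarrow> D \<subseteq> insert k I \<Longrightarrow> \<mu> C * \<mu> D \<le> \<mu> (C \<union> D) * \<mu> (C \<inter> D)"
    using assms(3) unfolding log_supermodular_on_def by auto
  have "\<mu> (insert k A) * \<mu> (insert k B) \<le> \<mu> (insert k (A \<union> B)) * \<mu> (insert k (A \<inter> B))"
    using lsm[of "insert k A" "insert k B"] A B by auto
  moreover have "\<mu> A * \<mu> B \<le> \<mu> (A \<union> B) * \<mu> (A \<inter> B)"
    using lsm[of A B] A B by auto
  moreover have "\<mu> (insert k A) * \<mu> B \<le> \<mu> (insert k (A \<union> B)) * \<mu> (A \<inter> B)"
    using lsm[of "insert k A" B] A B kB by (auto simp: Int_insert_left)
  moreover have "\<mu> A * \<mu> (insert k B) \<le> \<mu> (insert k (A \<union> B)) * \<mu> (A \<inter> B)"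
    using lsm[of A "insert k B"] A B kA by (auto simp: Int_insert_right)
  ultimately show "marginal \<mu> k A * marginal \<mu> k B \<le> marginal \<mu> k (A \<union> B) * marginal \<mu> k (A \<inter> B)"
    unfolding marginal_def using A B by (intro four_functions_two_point pos) auto
qed

text \<open>Log-supermodularity makes the conditional law of \<open>k\<close> increasing in the rest of the
  configuration: \<open>\<mu> (insert k A) / \<mu> A \<le> \<mu> (insert k B) / \<mu> B\<close> for \<open>A \<subseteq> B\<close>.\<close>
lemma mono_on_cond_mean:
  assumes "k \<notin> I" "positive_on (insert k I) \<mu>" "log_supermodular_on (insert k I) \<mu>"
    and "mono_on (Pow (insert k I)) f"
  shows "mono_on (Pow I) (cond_mean \<mu> k f)"
proof (rule mono_onI)
  fix A B assume "A \<in> Pow I" "B \<in> Pow I" "A \<le> B"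
  hence AB: "A \<subseteq> B" and B: "B \<subseteq> I" by auto
  have kB: "k \<notin> B" using B assms(1) by auto
  have mono: "\<And>C D. C \<subseteq> D \<Longrightarrow> D \<subseteq> insert k I \<Longrightarrow> f C \<le> f D"
    using assms(4) by (auto intro: mono_onD)
  have \<mu>_pos: "\<And>C. C \<subseteq> insert k I \<Longrightarrow> \<mu> C > 0"
    using assms(2) unfolding positive_on_def by blast
  define a0 a1 b0 b1 where "a0 = \<mu> A" "a1 = \<mu> (insert k A)" "b0 = \<mu> B" "b1 = \<mu> (insert k B)"
  have pos: "a0 > 0" "a1 > 0" "b0 > 0" "b1 > 0"
    unfolding a0_a1_b0_b1_def using AB B by (auto intro!: \<mu>_pos)
  have "insert k A \<subseteq> insert k I" "B \<subseteq> insert k I" using AB B by auto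
  hence "a1 * b0 \<le> \<mu> (insert k A \<union> B) * \<mu> (insert k A \<inter> B)"
    unfolding a0_a1_b0_b1_def using assms(3) unfolding log_supermodular_on_def by blast
  also have "insert k A \<union> B = insert k B" using AB by auto
  also have "insert k A \<inter> B = A" using AB kB by auto
  finally have ratio: "a1 * b0 \<le> b1 * a0" unfolding a0_a1_b0_b1_def by (simp add: mult.commute)
  define x y where "x = f B" "y = f (insert k B)"
  have xy: "x \<le> y" unfolding x_y_def using B by (intro mono) auto
  have fA: "f A \<le> x" "f (insert k A) \<le> y" unfolding x_y_def using AB B by (auto intro!: mono)
  have "cond_mean \<mu> k f A = (a0 * f A + a1 * f (insert k A)) / (a0 + a1)"
    unfolding cond_mean_def marginal_def a0_a1_b0_b1_def ..
  also have "\<dots> \<le> (a0 * x + a1 * y) / (a0 + a1)"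
    using pos fA by (intro divide_right_mono add_mono mult_left_mono) auto
  also have "\<dots> \<le> (b0 * x + b1 * y) / (b0 + b1)"
  proof -
    have "0 \<le> (b1 * a0 - a1 * b0) * (y - x)" using ratio xy by simp
    hence "(a0 * x + a1 * y) * (b0 + b1) \<le> (b0 * x + b1 * y) * (a0 + a1)"
      by (simp add: algebra_simps)
    thus ?thesis using pos by (simp add: divide_simps)
  qed
  also have "\<dots> = cond_mean \<mu> k f B"
    unfolding cond_mean_def marginal_def a0_a1_b0_b1_def x_y_def ..
  finally show "cond_mean \<mu> k f A \<le> cond_mean \<mu> k f B" .
qed

lemma cov_sum_marginal_le:
  assumes "finite I" "k \<notin> I" "positive_on (insert k I) \<mu>"
    and "mono_on (Pow (insert k I)) f" "mono_on (Pow (insert k I)) g"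
  shows "cov_sum (marginal \<mu> k) I (cond_mean \<mu> k f) (cond_mean \<mu> k g) \<le> cov_sum \<mu> (insert k I) f g"
proof -
  have "0 \<le> (\<Sum>A\<in>Pow I. marginal \<mu> k A) * (\<Sum>A\<in>Pow I. \<mu> A * \<mu> (insert k A)
        * (f (insert k A) - f A) * (g (insert k A) - g A) / marginal \<mu> k A)"
  proof (intro mult_nonneg_nonneg sum_nonneg)
    fix A assume A: "A \<in> Pow I"
    have pos: "\<mu> A > 0" "\<mu> (insert k A) > 0"
    proof -
      have "A \<subseteq> insert k I" "insert k A \<subseteq> insert k I" using A by auto
      thus "\<mu> A > 0" "\<mu> (insert k A) > 0" using assms(3) unfolding positive_on_def by blast+
    qed
    have "f A \<le> f (insert k A)" "g A \<le> g (insert k A)"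
      using A by (auto intro!: mono_onD[OF assms(4)] mono_onD[OF assms(5)])
    thus "0 \<le> \<mu> A * \<mu> (insert k A) * (f (insert k A) - f A) * (g (insert k A) - g A) / marginal \<mu> k A"
      using pos unfolding marginal_def by simp
    show "0 \<le> marginal \<mu> k A" using pos unfolding marginal_def by simp
  qed
  thus ?thesis using cov_sum_peel[OF assms(1-3), of f g] by simp
qed

theorem cov_sum_nonneg_fkg:
  assumes "finite I" "positive_on I \<mu>" "log_supermodular_on I \<mu>"
    and "mono_on (Pow I) f" "mono_on (Pow I) g"
  shows "0 \<le> cov_sum \<mu> I f g"
  using assms
proof (induction I arbitrary: \<mu> f g rule: finite_induct)
  case empty
  show ?case by (simp add: cov_sum_def)
next
  case (insert k I)
  have "0 \<le> cov_sum (marginal \<mu> k) I (cond_mean \<mu> k f) (cond_mean \<mu> k g)"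
    using insert by (intro insert.IH positive_on_marginal log_supermodular_on_marginal mono_on_cond_mean) auto
  also have "\<dots> \<le> cov_sum \<mu> (insert k I) f g"
    using insert by (intro cov_sum_marginal_le) auto
  finally show ?case .
qed

section \<open>A three-site estimate\<close>

lemma sum_sq_le_of_ratio_bounded:
  fixes x y R :: real
  assumes "x > 0" "y > 0" "R \<ge> 1" "x \<le> R * y" "y \<le> R * x"
  shows "(x + y)^2 \<le> 4 * R * (x * y)"
proof -
  have "0 \<le> (R * y - x) * (R * x - y)" using assms by simp
  hence sq: "R * (x * x + y * y) \<le> (R * R + 1) * (x * y)" by (simp add: algebra_simps)
  have "R * (x + y)^2 = R * (x * x + y * y) + 2 * R * (x * y)" by (simp add: power2_eq_square algebra_simps)
  also have "\<dots> \<le> (R * R + 1 + 2 * R) * (x * y)" using sq by (simp add: algebra_simps)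
  also have "\<dots> \<le> (4 * R * R) * (x * y)"
  proof (rule mult_right_mono)
    have "0 \<le> (R - 1) * (3 * R + 1)" using assms by simp
    thus "R * R + 1 + 2 * R \<le> 4 * R * R" by (simp add: algebra_simps)
  qed (use assms in simp)
  finally have "R * (x + y)^2 \<le> R * (4 * R * (x * y))" by (simp add: algebra_simps)
  thus ?thesis using assms by (simp add: mult_le_cancel_left)
qed

text \<open>The secant slope of \<open>r \<mapsto> (r - 1) / (r + 1)\<close> between \<open>r0\<close> and \<open>r1\<close> is
  \<open>2 / ((r0 + 1) (r1 + 1)) \<ge> 1 / (2 e\<^sup>4\<^sup>l r0)\<close>, while \<open>r1 - r0 \<ge> 4 a r0\<close>.\<close>
lemma ratio_gap_lower_bound:
  fixes r0 r1 a l :: real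
  assumes "r0 > 0" "r1 > 0" "exp (4 * a) * r0 \<le> r1" "exp (- (2 * l)) \<le> r0" "r1 \<le> exp (2 * l)"
    and "a > 0" "l \<ge> 0"
  shows "2 * a * exp (- (4 * l)) \<le> (r1 - 1) / (r1 + 1) - (r0 - 1) / (r0 + 1)"
proof -
  define E where "E = exp (2 * l)"
  have E1: "E \<ge> 1" unfolding E_def using assms by simp
  have e4: "exp (- (4 * l)) = 1 / (E * E)"
    unfolding E_def by (simp add: exp_minus exp_add[symmetric] inverse_eq_divide)
  have "(1 + 4 * a) * r0 \<le> exp (4 * a) * r0"
    using assms(1) exp_ge_add_one_self[of "4 * a"] by (intro mult_right_mono) auto
  hence gap: "4 * a * r0 \<le> r1 - r0" using assms(3) by (simp add: algebra_simps)
  have diff: "(r1 - 1) / (r1 + 1) - (r0 - 1) / (r0 + 1) = 2 * (r1 - r0) / ((r1 + 1) * (r0 + 1))"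
    using assms by (simp add: field_simps)
  have r0E: "1 \<le> E * r0"
    using assms(4) E1 unfolding E_def by (simp add: exp_minus field_simps)
  have "r1 + 1 \<le> 2 * E" using assms(5) E1 unfolding E_def by linarith
  hence "(r1 + 1) * (r0 + 1) \<le> (2 * E) * (r0 + 1)"
    using assms(1) by (intro mult_right_mono) auto
  also have "\<dots> \<le> E * E * (4 * r0)"
  proof -
    have "E * 1 \<le> E * (E * r0)" using E1 r0E by (intro mult_left_mono) auto
    moreover have "1 * (E * r0) \<le> E * (E * r0)" using E1 r0E by (intro mult_right_mono) auto
    ultimately show ?thesis by (simp add: algebra_simps)
  qed
  finally have denom: "(r1 + 1) * (r0 + 1) \<le> E * E * (4 * r0)" .
  have pos: "(r1 + 1) * (r0 + 1) > 0" using assms by simp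
  have "2 * a * exp (- (4 * l)) = 2 * a / (E * E)" using e4 by simp
  also have "\<dots> \<le> 2 * (4 * a * r0) / ((r1 + 1) * (r0 + 1))"
  proof -
    have "2 * a * ((r1 + 1) * (r0 + 1)) \<le> 2 * a * (E * E * (4 * r0))"
      using denom assms by (intro mult_left_mono) auto
    thus ?thesis using pos E1 by (simp add: divide_simps)
  qed
  also have "\<dots> \<le> 2 * (r1 - r0) / ((r1 + 1) * (r0 + 1))"
    using gap pos by (intro divide_right_mono) auto
  finally show ?thesis using diff by simp
qed

definition block_mass :: "('a set \<Rightarrow> real) \<Rightarrow> 'a \<Rightarrow> 'a \<Rightarrow> 'a set \<Rightarrow> real" where
  "block_mass \<mu> u v A = \<mu> A + \<mu> (insert u A) + \<mu> (insert v A) + \<mu> (insert u (insert v A))"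

lemma block_mass_pos: "block_mass (\<lambda>B. exp (E B)) u v A > 0"
  unfolding block_mass_def by (simp add: add_pos_pos)

text \<open>The mean of the spin \<open>\<plusminus>1\<close> at \<open>u\<close> under \<open>\<mu>\<close>, conditionally on the configuration
  \<open>A\<close> outside the block \<open>{u, v}\<close>.\<close>
definition block_mean :: "('a set \<Rightarrow> real) \<Rightarrow> 'a \<Rightarrow> 'a \<Rightarrow> 'a set \<Rightarrow> real" where
  "block_mean \<mu> u v A =
     (\<mu> (insert u A) + \<mu> (insert u (insert v A)) - \<mu> A - \<mu> (insert v A)) / block_mass \<mu> u v A"

lemma block_mean_of_modular:
  fixes E :: "'a set \<Rightarrow> real"
  assumes "E (insert u (insert v A)) + E A = E (insert u A) + E (insert v A)"
  defines "r \<equiv> exp (E (insert u A) - E A)"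
  shows "block_mean (\<lambda>B. exp (E B)) u v A = (r - 1) / (r + 1)"
proof -
  have u: "exp (E (insert u A)) = r * exp (E A)"
    unfolding r_def by (simp add: exp_diff)
  have uv: "exp (E (insert u (insert v A))) = r * exp (E (insert v A))"
  proof -
    have "E (insert u (insert v A)) = (E (insert u A) - E A) + E (insert v A)" using assms by linarith
    thus ?thesis unfolding r_def by (simp add: exp_add)
  qed
  define S where "S = exp (E A) + exp (E (insert v A))"
  have "S > 0" "r > 0" unfolding S_def r_def by (simp_all add: add_pos_pos)
  moreover have "block_mass (\<lambda>B. exp (E B)) u v A = (r + 1) * S"
    unfolding block_mass_def u uv S_def by (simp add: algebra_simps)
  moreover have "exp (E (insert u A)) + exp (E (insert u (insert v A))) - exp (E A) - exp (E (insert v A))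
      = (r - 1) * S"
    unfolding u uv S_def by (simp add: algebra_simps)
  ultimately show ?thesis
    unfolding block_mean_def by simp
qed

lemma block_mean_gap:
  fixes E :: "'a set \<Rightarrow> real"
  assumes modular: "\<And>B. u \<notin> B \<Longrightarrow> v \<notin> B \<Longrightarrow>
      E (insert u (insert v B)) + E B = E (insert u B) + E (insert v B)"
    and interaction: "4 * a \<le> E (insert u (insert j A)) + E A - E (insert u A) - E (insert j A)"
    and flip: "\<And>B. u \<notin> B \<Longrightarrow> \<bar>E (insert u B) - E B\<bar> \<le> 2 * l"
    and "u \<notin> A" "v \<notin> A" "u \<noteq> j" "v \<noteq> j" "a > 0" "l \<ge> 0"
  shows "2 * a * exp (- (4 * l)) \<le>
    block_mean (\<lambda>B. exp (E B)) u v (insert j A) - block_mean (\<lambda>B. exp (E B)) u v A"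
proof -
  have "2 * a * exp (- (4 * l)) \<le>
      (exp (E (insert u (insert j A)) - E (insert j A)) - 1) / (exp (E (insert u (insert j A)) - E (insert j A)) + 1)
      - (exp (E (insert u A) - E A) - 1) / (exp (E (insert u A) - E A) + 1)"
  proof (rule ratio_gap_lower_bound)
    show "exp (4 * a) * exp (E (insert u A) - E A) \<le> exp (E (insert u (insert j A)) - E (insert j A))"
      using interaction by (simp flip: exp_add)
    show "exp (- (2 * l)) \<le> exp (E (insert u A) - E A)"
      using flip[of A] assms(4) by simp
    show "exp (E (insert u (insert j A)) - E (insert j A)) \<le> exp (2 * l)"
      using flip[of "insert j A"] assms(4,6) by simp
  qed (use assms in auto)
  also have "\<dots> = block_mean (\<lambda>B. exp (E B)) u v (insert j A) - block_mean (\<lambda>B. exp (E B)) u v A"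
    using assms by (simp add: block_mean_of_modular)
  finally show ?thesis .
qed

lemma block_mass_flip_le:
  fixes E :: "'a set \<Rightarrow> real"
  assumes flip: "\<And>B. j \<notin> B \<Longrightarrow> \<bar>E (insert j B) - E B\<bar> \<le> 2 * l"
    and "j \<notin> A" "j \<noteq> u" "j \<noteq> v"
  shows "block_mass (\<lambda>B. exp (E B)) u v (insert j A) \<le> exp (2 * l) * block_mass (\<lambda>B. exp (E B)) u v A"
    and "block_mass (\<lambda>B. exp (E B)) u v A \<le> exp (2 * l) * block_mass (\<lambda>B. exp (E B)) u v (insert j A)"
proof -
  have le: "exp (E (insert j B)) \<le> exp (2 * l) * exp (E B)" "exp (E B) \<le> exp (2 * l) * exp (E (insert j B))"
    if "j \<notin> B" for B
    using flip[OF that] by (simp_all flip: exp_add)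
  have "j \<notin> insert u A" "j \<notin> insert v A" "j \<notin> insert u (insert v A)" using assms by auto
  note le = le[OF assms(2)] le[OF this(1)] le[OF this(2)] le[OF this(3)]
  show "block_mass (\<lambda>B. exp (E B)) u v (insert j A) \<le> exp (2 * l) * block_mass (\<lambda>B. exp (E B)) u v A"
    "block_mass (\<lambda>B. exp (E B)) u v A \<le> exp (2 * l) * block_mass (\<lambda>B. exp (E B)) u v (insert j A)"
    unfolding block_mass_def using le by (simp_all add: insert_commute algebra_simps)
qed

lemma product_of_gaps_lower_bound:
  fixes N0 N1 R D p q :: real
  assumes "N0 > 0" "N1 > 0" "R > 0" "(N0 + N1)^2 \<le> 4 * R * (N0 * N1)"
    and "0 < D" "D \<le> p" "D \<le> q"
  shows "D^2 / (4 * R) * (N0 + N1) \<le> N0 * N1 * p * q / (N0 + N1)"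
proof -
  have "(N0 + N1)^2 * D^2 \<le> (4 * R * (N0 * N1)) * D^2"
    using assms(4) by (rule mult_right_mono) simp
  hence "(N0 + N1)^2 * D^2 / (4 * R) \<le> N0 * N1 * D^2"
    using assms(3) by (simp add: divide_simps algebra_simps)
  also have "\<dots> \<le> N0 * N1 * (p * q)"
    using assms by (intro mult_left_mono) (auto simp: power2_eq_square intro: mult_mono)
  finally have "(N0 + N1)^2 * D^2 / (4 * R) \<le> N0 * N1 * p * q" by (simp add: mult.assoc)
  thus ?thesis using assms by (simp add: divide_simps power2_eq_square mult.commute mult.left_commute)
qed

lemma block_cov_lower_bound:
  fixes E :: "'a set \<Rightarrow> real"
  defines "\<mu> \<equiv> \<lambda>B. exp (E B)"
  assumes modular: "\<And>B. u \<notin> B \<Longrightarrow> v \<notin> B \<Longrightarrow>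
      E (insert u (insert v B)) + E B = E (insert u B) + E (insert v B)"
    and interaction: "\<And>k. k \<in> {u, v} \<Longrightarrow>
      4 * a \<le> E (insert k (insert j A)) + E A - E (insert k A) - E (insert j A)"
    and flip: "\<And>k B. k \<in> {u, v, j} \<Longrightarrow> k \<notin> B \<Longrightarrow> \<bar>E (insert k B) - E B\<bar> \<le> 2 * l"
    and "u \<notin> A" "v \<notin> A" "j \<notin> A" "u \<noteq> v" "u \<noteq> j" "v \<noteq> j" "a > 0" "l \<ge> 0"
  shows "a^2 * exp (- (12 * l)) * (block_mass \<mu> u v A + block_mass \<mu> u v (insert j A)) \<le>
    block_mass \<mu> u v A * block_mass \<mu> u v (insert j A)
    * (block_mean \<mu> u v (insert j A) - block_mean \<mu> u v A)
    * (block_mean \<mu> v u (insert j A) - block_mean \<mu> v u A)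
    / (block_mass \<mu> u v A + block_mass \<mu> u v (insert j A))"
proof -
  define N0 N1 where "N0 = block_mass \<mu> u v A" "N1 = block_mass \<mu> u v (insert j A)"
  define D where "D = 2 * a * exp (- (4 * l))"
  have pos: "N0 > 0" "N1 > 0" unfolding N0_N1_def \<mu>_def by (simp_all add: block_mass_pos)
  have "(N0 + N1)^2 \<le> 4 * exp (2 * l) * (N0 * N1)"
    unfolding N0_N1_def \<mu>_def using assms
    by (intro sum_sq_le_of_ratio_bounded block_mass_pos block_mass_flip_le) auto
  moreover have "D \<le> block_mean \<mu> u v (insert j A) - block_mean \<mu> u v A"
    unfolding D_def \<mu>_def using assms by (intro block_mean_gap) auto
  moreover have "D \<le> block_mean \<mu> v u (insert j A) - block_mean \<mu> v u A"
  proof -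
    have "E (insert v (insert u B)) + E B = E (insert v B) + E (insert u B)" if "v \<notin> B" "u \<notin> B" for B
      using modular[OF that(2,1)] by (simp add: insert_commute)
    thus ?thesis
      unfolding D_def \<mu>_def using assms by (intro block_mean_gap) auto
  qed
  ultimately have gaps: "D^2 / (4 * exp (2 * l)) * (N0 + N1) \<le>
      N0 * N1 * (block_mean \<mu> u v (insert j A) - block_mean \<mu> u v A)
      * (block_mean \<mu> v u (insert j A) - block_mean \<mu> v u A) / (N0 + N1)"
    using pos assms by (intro product_of_gaps_lower_bound) (auto simp: D_def)
  have "D^2 / (4 * exp (2 * l)) = a^2 * exp (- (10 * l))"
    unfolding D_def by (simp add: power2_eq_square field_simps flip: exp_add)
  also have "\<dots> \<ge> a^2 * exp (- (12 * l))"
    using assms by (simp add: mult_left_mono)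
  finally have "a^2 * exp (- (12 * l)) * (N0 + N1) \<le> D^2 / (4 * exp (2 * l)) * (N0 + N1)"
    using pos by (intro mult_right_mono) auto
  then show ?thesis using gaps unfolding N0_N1_def by (rule order_trans)
qed

section \<open>Two spins with a common neighbour\<close>

definition pm_spin :: "'a \<Rightarrow> 'a set \<Rightarrow> real" where
  "pm_spin k A = (if k \<in> A then 1 else -1)"

lemma mono_on_pm_spin: "mono_on X (pm_spin k)"
  by (rule mono_onI) (auto simp: pm_spin_def)

lemma marginal_marginal_eq_block_mass: "marginal (marginal \<mu> u) v A = block_mass \<mu> u v A"
  unfolding marginal_def block_mass_def by simp

lemma cond_mean_marginal_pm_spin:
  assumes "u \<noteq> v" "u \<notin> A" "v \<notin> A" "marginal \<mu> u A \<noteq> 0" "marginal \<mu> u (insert v A) \<noteq> 0"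
  shows "cond_mean (marginal \<mu> u) v (cond_mean \<mu> u (pm_spin u)) A = block_mean \<mu> u v A"
    and "cond_mean (marginal \<mu> u) v (cond_mean \<mu> u (pm_spin v)) A = block_mean \<mu> v u A"
proof -
  have mean: "marginal \<mu> u B * cond_mean \<mu> u f B = \<mu> B * f B + \<mu> (insert u B) * f (insert u B)"
    if "marginal \<mu> u B \<noteq> 0" for B f
    using that unfolding cond_mean_def by simp
  have expand: "cond_mean (marginal \<mu> u) v F A
      = (marginal \<mu> u A * F A + marginal \<mu> u (insert v A) * F (insert v A)) / block_mass \<mu> u v A" for F
    unfolding cond_mean_def marginal_marginal_eq_block_mass ..
  show "cond_mean (marginal \<mu> u) v (cond_mean \<mu> u (pm_spin u)) A = block_mean \<mu> u v A"
    unfolding expand mean[OF assms(4)] mean[OF assms(5)] block_mean_def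
    using assms(1-3) by (simp add: pm_spin_def algebra_simps)
  have "block_mass \<mu> v u A = block_mass \<mu> u v A"
    unfolding block_mass_def by (simp add: insert_commute)
  then show "cond_mean (marginal \<mu> u) v (cond_mean \<mu> u (pm_spin v)) A = block_mean \<mu> v u A"
    unfolding expand mean[OF assms(4)] mean[OF assms(5)] block_mean_def
    using assms(1-3) by (simp add: pm_spin_def insert_commute algebra_simps)
qed

lemma cov_sum_ge_average_cond_cov:
  assumes "finite I" "k \<notin> I" "positive_on (insert k I) \<mu>" "log_supermodular_on (insert k I) \<mu>"
    and "mono_on (Pow (insert k I)) f" "mono_on (Pow (insert k I)) g"
  shows "(\<Sum>A\<in>Pow I. marginal \<mu> k A) * (\<Sum>A\<in>Pow I. \<mu> A * \<mu> (insert k A)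
      * (f (insert k A) - f A) * (g (insert k A) - g A) / marginal \<mu> k A)
    \<le> cov_sum \<mu> (insert k I) f g"
proof -
  have "0 \<le> cov_sum (marginal \<mu> k) I (cond_mean \<mu> k f) (cond_mean \<mu> k g)"
    using assms by (intro cov_sum_nonneg_fkg positive_on_marginal log_supermodular_on_marginal
        mono_on_cond_mean)
  thus ?thesis using cov_sum_peel[OF assms(1-3), of f g] by linarith
qed

lemma block_term_eq:
  fixes \<mu> :: "'a set \<Rightarrow> real" and u v j :: 'a and A :: "'a set"
  defines "\<nu> \<equiv> marginal (marginal \<mu> u) v"
    and "F \<equiv> cond_mean (marginal \<mu> u) v (cond_mean \<mu> u (pm_spin u))"
    and "G \<equiv> cond_mean (marginal \<mu> u) v (cond_mean \<mu> u (pm_spin v))"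
  assumes "positive_on (insert u (insert v (insert j A))) \<mu>"
    and "u \<notin> A" "v \<notin> A" "u \<noteq> v" "u \<noteq> j" "v \<noteq> j"
  shows "marginal \<nu> j A = block_mass \<mu> u v A + block_mass \<mu> u v (insert j A)"
    and "\<nu> A * \<nu> (insert j A) * (F (insert j A) - F A) * (G (insert j A) - G A) / marginal \<nu> j A
      = block_mass \<mu> u v A * block_mass \<mu> u v (insert j A)
        * (block_mean \<mu> u v (insert j A) - block_mean \<mu> u v A)
        * (block_mean \<mu> v u (insert j A) - block_mean \<mu> v u A)
        / (block_mass \<mu> u v A + block_mass \<mu> u v (insert j A))"
proof -
  have mass: "\<nu> B = block_mass \<mu> u v B" for B
    unfolding \<nu>_def by (rule marginal_marginal_eq_block_mass)
  show total: "marginal \<nu> j A = block_mass \<mu> u v A + block_mass \<mu> u v (insert j A)"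
    unfolding marginal_def mass ..
  have "marginal \<mu> u B \<noteq> 0" if "B \<subseteq> insert v (insert j A)" for B
    using positive_on_marginal[OF assms(4)] that unfolding positive_on_def
    by (metis insert_commute less_irrefl)
  then have "F B = block_mean \<mu> u v B" "G B = block_mean \<mu> v u B" if "B \<in> {A, insert j A}" for B
    using that assms(5-9) unfolding F_def G_def
    by (auto intro!: cond_mean_marginal_pm_spin)
  then show "\<nu> A * \<nu> (insert j A) * (F (insert j A) - F A) * (G (insert j A) - G A) / marginal \<nu> j A
      = block_mass \<mu> u v A * block_mass \<mu> u v (insert j A)
        * (block_mean \<mu> u v (insert j A) - block_mean \<mu> u v A)
        * (block_mean \<mu> v u (insert j A) - block_mean \<mu> v u A)
        / (block_mass \<mu> u v A + block_mass \<mu> u v (insert j A))"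
    unfolding total mass by simp
qed

text \<open>Summing out \<open>u\<close> and \<open>v\<close> can only decrease the covariance; summing out \<open>j\<close> then
  leaves the averaged block term plus a covariance that is nonnegative by FKG.\<close>
lemma cov_sum_pm_spin_lower_bound:
  fixes \<mu> :: "'a set \<Rightarrow> real" and u v j :: 'a and I0 :: "'a set"
  defines "I \<equiv> insert u (insert v (insert j I0))"
  assumes "finite I0" "u \<notin> I0" "v \<notin> I0" "j \<notin> I0" "u \<noteq> v" "u \<noteq> j" "v \<noteq> j"
    and pos: "positive_on I \<mu>" and lsm: "log_supermodular_on I \<mu>"
    and block: "\<And>A. A \<subseteq> I0 \<Longrightarrow>
      c * (block_mass \<mu> u v A + block_mass \<mu> u v (insert j A)) \<le>
      block_mass \<mu> u v A * block_mass \<mu> u v (insert j A)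
      * (block_mean \<mu> u v (insert j A) - block_mean \<mu> u v A)
      * (block_mean \<mu> v u (insert j A) - block_mean \<mu> v u A)
      / (block_mass \<mu> u v A + block_mass \<mu> u v (insert j A))"
  shows "c * (\<Sum>A\<in>Pow I. \<mu> A)^2 \<le> cov_sum \<mu> I (pm_spin u) (pm_spin v)"
proof -
  define I1 I2 where "I1 = insert v (insert j I0)" "I2 = insert j I0"
  define \<nu>1 F1 G1 where "\<nu>1 = marginal \<mu> u" "F1 = cond_mean \<mu> u (pm_spin u)" "G1 = cond_mean \<mu> u (pm_spin v)"
  define \<nu>2 F2 G2 where "\<nu>2 = marginal \<nu>1 v" "F2 = cond_mean \<nu>1 v F1" "G2 = cond_mean \<nu>1 v G1"
  define T where "T = (\<Sum>A\<in>Pow I. \<mu> A)"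
  have fin: "finite I1" "finite I2" and notin: "u \<notin> I1" "v \<notin> I2"
    unfolding I1_I2_def using assms by auto
  have I: "I = insert u I1" and I1: "I1 = insert v I2" unfolding I_def I1_I2_def by simp_all
  have pos1: "positive_on I1 \<nu>1" and lsm1: "log_supermodular_on I1 \<nu>1"
    and mono1: "mono_on (Pow I1) F1" "mono_on (Pow I1) G1"
    unfolding \<nu>1_F1_G1_def using pos lsm notin(1) unfolding I
    by (auto intro!: positive_on_marginal log_supermodular_on_marginal mono_on_cond_mean mono_on_pm_spin)
  have pos2: "positive_on I2 \<nu>2" and lsm2: "log_supermodular_on I2 \<nu>2"
    and mono2: "mono_on (Pow I2) F2" "mono_on (Pow I2) G2"
    unfolding \<nu>2_F2_G2_def using pos1 lsm1 mono1 notin(2) unfolding I1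
    by (auto intro!: positive_on_marginal log_supermodular_on_marginal mono_on_cond_mean)
  have total: "T = (\<Sum>A\<in>Pow I0. marginal \<nu>2 j A)"
    using assms fin notin unfolding T_def I I1 I1_I2_def \<nu>2_F2_G2_def \<nu>1_F1_G1_def marginal_def
    by (simp add: sum_Pow_insert)
  have "T * (\<Sum>A\<in>Pow I0. \<nu>2 A * \<nu>2 (insert j A)
      * (F2 (insert j A) - F2 A) * (G2 (insert j A) - G2 A) / marginal \<nu>2 j A)
    \<le> cov_sum \<nu>2 I2 F2 G2"
    unfolding total I1_I2_def using assms(2,5) pos2 lsm2 mono2 unfolding I1_I2_def
    by (rule cov_sum_ge_average_cond_cov)
  also have "cov_sum \<nu>2 I2 F2 G2 \<le> cov_sum \<nu>1 I1 F1 G1"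
    unfolding \<nu>2_F2_G2_def I1 using fin notin pos1 mono1 unfolding I1
    by (intro cov_sum_marginal_le) auto
  also have "\<dots> \<le> cov_sum \<mu> I (pm_spin u) (pm_spin v)"
    unfolding \<nu>1_F1_G1_def I using fin notin pos unfolding I
    by (intro cov_sum_marginal_le mono_on_pm_spin) auto
  finally have peeled: "T * (\<Sum>A\<in>Pow I0. \<nu>2 A * \<nu>2 (insert j A)
      * (F2 (insert j A) - F2 A) * (G2 (insert j A) - G2 A) / marginal \<nu>2 j A)
    \<le> cov_sum \<mu> I (pm_spin u) (pm_spin v)" .
  moreover have "c * T \<le> (\<Sum>A\<in>Pow I0. \<nu>2 A * \<nu>2 (insert j A)
      * (F2 (insert j A) - F2 A) * (G2 (insert j A) - G2 A) / marginal \<nu>2 j A)"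
    unfolding total sum_distrib_left
  proof (rule sum_mono)
    fix A assume A: "A \<in> Pow I0"
    have pos_A: "positive_on (insert u (insert v (insert j A))) \<mu>"
      using pos A unfolding positive_on_def I_def by blast
    have "u \<notin> A" "v \<notin> A" using A assms(3,4) by auto
    note block_term = block_term_eq[OF pos_A this assms(6-8)]
    show "c * marginal \<nu>2 j A \<le> \<nu>2 A * \<nu>2 (insert j A)
        * (F2 (insert j A) - F2 A) * (G2 (insert j A) - G2 A) / marginal \<nu>2 j A"
      unfolding \<nu>2_F2_G2_def \<nu>1_F1_G1_def block_term(2) unfolding block_term(1)
      using A by (intro block) auto
  qed
  moreover have "0 \<le> T"
    unfolding T_def using pos unfolding positive_on_def by (intro sum_nonneg) (auto intro: less_imp_le)
  ultimately have "T * (c * T) \<le> cov_sum \<mu> I (pm_spin u) (pm_spin v)"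
    using peeled by (meson mult_left_mono order_trans)
  thus ?thesis unfolding T_def[symmetric] by (simp add: power2_eq_square algebra_simps)
qed

theorem cov_sum_exp_lower_bound:
  fixes E :: "'a set \<Rightarrow> real" and u v j :: 'a and I0 :: "'a set"
  defines "I \<equiv> insert u (insert v (insert j I0))" and "\<mu> \<equiv> \<lambda>A. exp (E A)"
  assumes "finite I0" "u \<notin> I0" "v \<notin> I0" "j \<notin> I0" "u \<noteq> v" "u \<noteq> j" "v \<noteq> j" "a > 0" "l \<ge> 0"
    and supermodular: "\<And>A B. E A + E B \<le> E (A \<union> B) + E (A \<inter> B)"
    and modular: "\<And>B. u \<notin> B \<Longrightarrow> v \<notin> B \<Longrightarrow>
      E (insert u (insert v B)) + E B = E (insert u B) + E (insert v B)"
    and interaction: "\<And>k B. k \<in> {u, v} \<Longrightarrow> k \<notin> B \<Longrightarrow> j \<notin> B \<Longrightarrow>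
      4 * a \<le> E (insert k (insert j B)) + E B - E (insert k B) - E (insert j B)"
    and flip: "\<And>k B. k \<in> {u, v, j} \<Longrightarrow> k \<notin> B \<Longrightarrow> \<bar>E (insert k B) - E B\<bar> \<le> 2 * l"
  shows "a^2 * exp (- (12 * l)) * (\<Sum>A\<in>Pow I. \<mu> A)^2 \<le> cov_sum \<mu> I (pm_spin u) (pm_spin v)"
  unfolding I_def \<mu>_def
proof (rule cov_sum_pm_spin_lower_bound)
  show "positive_on (insert u (insert v (insert j I0))) (\<lambda>A. exp (E A))"
    unfolding positive_on_def by simp
  show "log_supermodular_on (insert u (insert v (insert j I0))) (\<lambda>A. exp (E A))"
    using supermodular by (rule log_supermodular_on_exp)
next
  fix A assume "A \<subseteq> I0"
  then have "u \<notin> A" "v \<notin> A" "j \<notin> A" using assms by auto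
  with assms show "a^2 * exp (- (12 * l)) *
      (block_mass (\<lambda>A. exp (E A)) u v A + block_mass (\<lambda>A. exp (E A)) u v (insert j A))
    \<le> block_mass (\<lambda>A. exp (E A)) u v A * block_mass (\<lambda>A. exp (E A)) u v (insert j A)
      * (block_mean (\<lambda>A. exp (E A)) u v (insert j A) - block_mean (\<lambda>A. exp (E A)) u v A)
      * (block_mean (\<lambda>A. exp (E A)) v u (insert j A) - block_mean (\<lambda>A. exp (E A)) v u A)
      / (block_mass (\<lambda>A. exp (E A)) u v A + block_mass (\<lambda>A. exp (E A)) u v (insert j A))"
    by (intro block_cov_lower_bound) auto
qed (use assms in auto)

section \<open>The gauged RBM energy\<close>

context
  fixes n m :: nat and J :: "nat \<Rightarrow> nat \<Rightarrow> real" and h g :: "nat \<Rightarrow> real"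
    and S :: "nat set" and xS :: "nat \<Rightarrow> real"
begin

text \<open>A set \<open>A\<close> of sites (\<open>Inl i\<close> observed, \<open>Inr j\<close> latent) encodes the configuration that
  is \<open>+1\<close> exactly on \<open>A\<close>, with the observed sites in \<open>S\<close> pinned to \<open>xS\<close>. The latent spin at \<open>j\<close>
  is \<open>col_sign j * lat_spin A j\<close>; this gauge makes every \<open>gauged_coupling\<close> nonnegative, and
  \<open>gauged_energy A\<close> is the exponent of the RBM weight of the encoded configuration.\<close>

definition col_sign :: "nat \<Rightarrow> real" where
  "col_sign j = (if \<forall>i<n. J i j \<ge> 0 then 1 else -1)"

definition gauged_coupling :: "nat \<Rightarrow> nat \<Rightarrow> real" where
  "gauged_coupling i j = J i j * col_sign j"

definition obs_spin :: "(nat + nat) set \<Rightarrow> nat \<Rightarrow> real" where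
  "obs_spin A i = (if i \<in> S then xS i else if Inl i \<in> A then 1 else -1)"

definition lat_spin :: "(nat + nat) set \<Rightarrow> nat \<Rightarrow> real" where
  "lat_spin A j = (if Inr j \<in> A then 1 else -1)"

definition gauged_energy :: "(nat + nat) set \<Rightarrow> real" where
  "gauged_energy A = (\<Sum>i<n. \<Sum>j<m. gauged_coupling i j * (obs_spin A i * lat_spin A j))
     + (\<Sum>i<n. h i * obs_spin A i) + (\<Sum>j<m. g j * col_sign j * lat_spin A j)"

lemma energy_diff:
  "gauged_energy A1 - gauged_energy A2 =
    (\<Sum>i<n. \<Sum>j<m. gauged_coupling i j
        * (obs_spin A1 i * lat_spin A1 j - obs_spin A2 i * lat_spin A2 j))
    + (\<Sum>i<n. h i * (obs_spin A1 i - obs_spin A2 i))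
    + (\<Sum>j<m. g j * col_sign j * (lat_spin A1 j - lat_spin A2 j))"
  unfolding gauged_energy_def by (simp add: sum_subtractf right_diff_distrib)

lemma energy_second_diff:
  "gauged_energy A1 + gauged_energy A2 - gauged_energy A3 - gauged_energy A4 =
    (\<Sum>i<n. \<Sum>j<m. gauged_coupling i j
        * (obs_spin A1 i * lat_spin A1 j + obs_spin A2 i * lat_spin A2 j
           - obs_spin A3 i * lat_spin A3 j - obs_spin A4 i * lat_spin A4 j))
    + (\<Sum>i<n. h i * (obs_spin A1 i + obs_spin A2 i - obs_spin A3 i - obs_spin A4 i))
    + (\<Sum>j<m. g j * col_sign j * (lat_spin A1 j + lat_spin A2 j - lat_spin A3 j - lat_spin A4 j))"
  unfolding gauged_energy_def
  by (simp add: sum_subtractf sum.distrib distrib_left right_diff_distrib)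

lemma gauged_coupling_nonneg:
  assumes "\<forall>j<m. (\<forall>i<n. J i j \<ge> 0) \<or> (\<forall>i<n. J i j \<le> 0)" "i < n" "j < m"
  shows "gauged_coupling i j \<ge> 0"
  using assms unfolding gauged_coupling_def col_sign_def by (auto simp: mult_nonpos_nonpos)

lemma abs_gauged_coupling: "\<bar>gauged_coupling i j\<bar> = \<bar>J i j\<bar>"
  unfolding gauged_coupling_def col_sign_def by (simp add: abs_mult)

lemma gauged_coupling_ge:
  assumes "locally_consistent n m J h g a l" "i < n" "j < m" "J i j \<noteq> 0"
  shows "a \<le> gauged_coupling i j"
proof -
  have "0 \<le> gauged_coupling i j"
    using assms by (intro gauged_coupling_nonneg) (auto simp: locally_consistent_def)
  moreover have "a \<le> \<bar>J i j\<bar>" using assms unfolding locally_consistent_def by blast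
  ultimately show ?thesis by (metis abs_gauged_coupling abs_of_nonneg)
qed

lemma locally_consistent_le:
  assumes "locally_consistent n m J h g a l" "i < n" "j < m" "J i j \<noteq> 0"
  shows "a \<le> l"
proof -
  have "\<bar>J i j\<bar> \<le> (\<Sum>j<m. \<bar>J i j\<bar>)" using assms(3) by (intro member_le_sum) auto
  thus ?thesis using assms unfolding locally_consistent_def by fastforce
qed

lemma spin_products_supermodular:
  "obs_spin A i * lat_spin A j + obs_spin B i * lat_spin B j
    \<le> obs_spin (A \<union> B) i * lat_spin (A \<union> B) j + obs_spin (A \<inter> B) i * lat_spin (A \<inter> B) j"
  by (cases "i \<in> S"; cases "Inl i \<in> A"; cases "Inl i \<in> B"; cases "Inr j \<in> A"; cases "Inr j \<in> B")
    (simp_all add: obs_spin_def lat_spin_def)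

lemma energy_supermodular:
  assumes "\<forall>j<m. (\<forall>i<n. J i j \<ge> 0) \<or> (\<forall>i<n. J i j \<le> 0)"
  shows "gauged_energy A + gauged_energy B \<le> gauged_energy (A \<union> B) + gauged_energy (A \<inter> B)"
proof -
  have "(\<Sum>i<n. h i * (obs_spin (A \<union> B) i + obs_spin (A \<inter> B) i - obs_spin A i - obs_spin B i)) = 0"
    by (intro sum.neutral ballI) (auto simp: obs_spin_def)
  moreover have "(\<Sum>j<m. g j * col_sign j
      * (lat_spin (A \<union> B) j + lat_spin (A \<inter> B) j - lat_spin A j - lat_spin B j)) = 0"
    by (intro sum.neutral ballI) (auto simp: lat_spin_def)
  moreover have "0 \<le> (\<Sum>i<n. \<Sum>j<m. gauged_coupling i j
      * (obs_spin (A \<union> B) i * lat_spin (A \<union> B) j + obs_spin (A \<inter> B) i * lat_spin (A \<inter> B) j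
         - obs_spin A i * lat_spin A j - obs_spin B i * lat_spin B j))"
    using gauged_coupling_nonneg[OF assms] spin_products_supermodular
    by (intro sum_nonneg mult_nonneg_nonneg) (auto simp: algebra_simps)
  ultimately have "0 \<le> gauged_energy (A \<union> B) + gauged_energy (A \<inter> B) - gauged_energy A - gauged_energy B"
    unfolding energy_second_diff by simp
  thus ?thesis by simp
qed

text \<open>Observed spins interact only through latent ones.\<close>
lemma energy_modular_obs:
  assumes "i1 \<noteq> i2" "i1 \<notin> S" "i2 \<notin> S" "Inl i1 \<notin> B" "Inl i2 \<notin> B"
  shows "gauged_energy (insert (Inl i1) (insert (Inl i2) B)) + gauged_energy B
     = gauged_energy (insert (Inl i1) B) + gauged_energy (insert (Inl i2) B)"
proof -
  let ?B12 = "insert (Inl i1) (insert (Inl i2) B)" and ?B1 = "insert (Inl i1) B"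
    and ?B2 = "insert (Inl i2) B"
  have lat: "lat_spin (insert (Inl i) C) = lat_spin C" for i C by (auto simp: lat_spin_def)
  have obs: "obs_spin ?B12 i + obs_spin B i - obs_spin ?B1 i - obs_spin ?B2 i = 0" for i
    using assms by (cases "i \<in> S"; cases "Inl i \<in> B"; cases "i = i1"; cases "i = i2")
      (auto simp: obs_spin_def)
  have pair: "obs_spin ?B12 i * lat_spin B j + obs_spin B i * lat_spin B j
      - obs_spin ?B1 i * lat_spin B j - obs_spin ?B2 i * lat_spin B j = 0" for i j
  proof -
    have "obs_spin ?B12 i * lat_spin B j + obs_spin B i * lat_spin B j
        - obs_spin ?B1 i * lat_spin B j - obs_spin ?B2 i * lat_spin B j
      = (obs_spin ?B12 i + obs_spin B i - obs_spin ?B1 i - obs_spin ?B2 i) * lat_spin B j"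
      by (simp add: algebra_simps)
    thus ?thesis using obs by simp
  qed
  have "gauged_energy ?B12 + gauged_energy B - gauged_energy ?B1 - gauged_energy ?B2 = 0"
    unfolding energy_second_diff lat pair obs by simp
  thus ?thesis by simp
qed

lemma energy_interaction:
  assumes "i0 < n" "j0 < m" "i0 \<notin> S" "Inl i0 \<notin> B" "Inr j0 \<notin> B"
  shows "gauged_energy (insert (Inl i0) (insert (Inr j0) B)) + gauged_energy B
     - gauged_energy (insert (Inl i0) B) - gauged_energy (insert (Inr j0) B) = 4 * gauged_coupling i0 j0"
proof -
  let ?B12 = "insert (Inl i0) (insert (Inr j0) B)" and ?B1 = "insert (Inl i0) B"
    and ?B2 = "insert (Inr j0) B"
  have obs: "(\<Sum>i<n. h i * (obs_spin ?B12 i + obs_spin B i - obs_spin ?B1 i - obs_spin ?B2 i)) = 0"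
    using assms by (auto intro!: sum.neutral simp: obs_spin_def)
  have lat: "(\<Sum>j<m. g j * col_sign j * (lat_spin ?B12 j + lat_spin B j - lat_spin ?B1 j - lat_spin ?B2 j))
      = 0"
    using assms by (auto intro!: sum.neutral simp: lat_spin_def)
  have pair: "gauged_coupling i j * (obs_spin ?B12 i * lat_spin ?B12 j + obs_spin B i * lat_spin B j
        - obs_spin ?B1 i * lat_spin ?B1 j - obs_spin ?B2 i * lat_spin ?B2 j)
      = (if i = i0 then (if j = j0 then 4 * gauged_coupling i0 j0 else 0) else 0)" for i j
    using assms by (cases "i \<in> S"; cases "Inl i \<in> B"; cases "Inr j \<in> B")
      (auto simp: obs_spin_def lat_spin_def)
  have sum_if: "(\<Sum>j\<in>X. if P then f j else 0) = (if P then (\<Sum>j\<in>X. f j) else 0)"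
    for X P and f :: "nat \<Rightarrow> real"
    by simp
  show ?thesis unfolding energy_second_diff obs lat pair using assms by (simp add: sum_if)
qed

lemma energy_flip_obs:
  assumes "i0 < n" "i0 \<notin> S" "Inl i0 \<notin> B"
  shows "gauged_energy (insert (Inl i0) B) - gauged_energy B
     = 2 * (\<Sum>j<m. gauged_coupling i0 j * lat_spin B j) + 2 * h i0"
proof -
  have "(\<Sum>i<n. h i * (obs_spin (insert (Inl i0) B) i - obs_spin B i))
      = (\<Sum>i<n. if i = i0 then 2 * h i0 else 0)"
    using assms by (intro sum.cong) (auto simp: obs_spin_def)
  then have obs: "(\<Sum>i<n. h i * (obs_spin (insert (Inl i0) B) i - obs_spin B i)) = 2 * h i0"
    using assms by simp
  have lat: "(\<Sum>j<m. g j * col_sign j * (lat_spin (insert (Inl i0) B) j - lat_spin B j)) = 0"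
    by (auto intro!: sum.neutral simp: lat_spin_def)
  have pair: "(\<Sum>i<n. \<Sum>j<m. gauged_coupling i j
        * (obs_spin (insert (Inl i0) B) i * lat_spin (insert (Inl i0) B) j - obs_spin B i * lat_spin B j))
      = (\<Sum>i<n. if i = i0 then (\<Sum>j<m. 2 * (gauged_coupling i0 j * lat_spin B j)) else 0)"
    using assms by (intro sum.cong) (auto simp: obs_spin_def lat_spin_def intro!: sum.neutral sum.cong)
  show ?thesis unfolding energy_diff obs lat pair using assms by (simp add: sum_distrib_left)
qed

lemma energy_flip_lat:
  assumes "j0 < m" "Inr j0 \<notin> B"
  shows "gauged_energy (insert (Inr j0) B) - gauged_energy B
     = 2 * (\<Sum>i<n. gauged_coupling i j0 * obs_spin B i) + 2 * g j0 * col_sign j0"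
proof -
  have "(\<Sum>j<m. g j * col_sign j * (lat_spin (insert (Inr j0) B) j - lat_spin B j))
      = (\<Sum>j<m. if j = j0 then 2 * g j0 * col_sign j0 else 0)"
    using assms by (intro sum.cong) (auto simp: lat_spin_def)
  then have lat: "(\<Sum>j<m. g j * col_sign j * (lat_spin (insert (Inr j0) B) j - lat_spin B j))
      = 2 * g j0 * col_sign j0"
    using assms by simp
  have obs: "(\<Sum>i<n. h i * (obs_spin (insert (Inr j0) B) i - obs_spin B i)) = 0"
    by (auto intro!: sum.neutral simp: obs_spin_def)
  have "(\<Sum>j<m. gauged_coupling i j
        * (obs_spin (insert (Inr j0) B) i * lat_spin (insert (Inr j0) B) j - obs_spin B i * lat_spin B j))
      = (\<Sum>j<m. if j = j0 then 2 * (gauged_coupling i j0 * obs_spin B i) else 0)" for i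
    using assms by (intro sum.cong) (auto simp: obs_spin_def lat_spin_def)
  then have pair: "(\<Sum>i<n. \<Sum>j<m. gauged_coupling i j
        * (obs_spin (insert (Inr j0) B) i * lat_spin (insert (Inr j0) B) j - obs_spin B i * lat_spin B j))
      = (\<Sum>i<n. 2 * (gauged_coupling i j0 * obs_spin B i))"
    using assms by simp
  show ?thesis unfolding energy_diff obs lat pair using assms by (simp add: sum_distrib_left)
qed

lemma energy_flip_obs_bound:
  assumes lc: "locally_consistent n m J h g a l" and "i0 < n" "i0 \<notin> S" "Inl i0 \<notin> B"
  shows "\<bar>gauged_energy (insert (Inl i0) B) - gauged_energy B\<bar> \<le> 2 * l"
proof -
  have "\<bar>\<Sum>j<m. gauged_coupling i0 j * lat_spin B j\<bar> \<le> (\<Sum>j<m. \<bar>gauged_coupling i0 j * lat_spin B j\<bar>)"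
    by (rule sum_abs)
  also have "\<dots> = (\<Sum>j<m. \<bar>J i0 j\<bar>)"
    by (intro sum.cong) (auto simp: abs_mult abs_gauged_coupling lat_spin_def)
  finally have "\<bar>\<Sum>j<m. gauged_coupling i0 j * lat_spin B j\<bar> + \<bar>h i0\<bar> \<le> l"
    using lc assms(2) unfolding locally_consistent_def by fastforce
  thus ?thesis unfolding energy_flip_obs[OF assms(2-4)] by linarith
qed

lemma energy_flip_lat_bound:
  assumes lc: "locally_consistent n m J h g a l" and xs: "\<forall>i\<in>S. xS i \<in> {-1, 1}"
    and "j0 < m" "Inr j0 \<notin> B"
  shows "\<bar>gauged_energy (insert (Inr j0) B) - gauged_energy B\<bar> \<le> 2 * l"
proof -
  have "\<bar>\<Sum>i<n. gauged_coupling i j0 * obs_spin B i\<bar> \<le> (\<Sum>i<n. \<bar>gauged_coupling i j0 * obs_spin B i\<bar>)"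
    by (rule sum_abs)
  also have "\<dots> = (\<Sum>i<n. \<bar>J i j0\<bar>)"
    using xs by (intro sum.cong) (auto simp: abs_mult abs_gauged_coupling obs_spin_def)
  finally have "\<bar>\<Sum>i<n. gauged_coupling i j0 * obs_spin B i\<bar> + \<bar>g j0 * col_sign j0\<bar> \<le> l"
    using lc assms(3) unfolding locally_consistent_def by (fastforce simp: abs_mult col_sign_def)
  thus ?thesis unfolding energy_flip_lat[OF assms(3-4)] by linarith
qed

section \<open>Conditional expectations as sums over the free sites\<close>

definition obs_config :: "(nat + nat) set \<Rightarrow> nat \<Rightarrow> real" where
  "obs_config A = (\<lambda>i. if i < n then obs_spin A i else undefined)"

definition lat_config :: "(nat + nat) set \<Rightarrow> nat \<Rightarrow> real" where
  "lat_config A = (\<lambda>j. if j < m then col_sign j * lat_spin A j else undefined)"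

lemma rbm_weight_config: "rbm_weight n m J h g (obs_config A) (lat_config A) = exp (gauged_energy A)"
  unfolding rbm_weight_def gauged_energy_def
proof (intro arg_cong[where f=exp] arg_cong2[where f="(+)"])
  show "(\<Sum>i<n. \<Sum>j<m. obs_config A i * J i j * lat_config A j)
      = (\<Sum>i<n. \<Sum>j<m. gauged_coupling i j * (obs_spin A i * lat_spin A j))"
    by (intro sum.cong refl) (simp add: obs_config_def lat_config_def gauged_coupling_def)
  show "(\<Sum>i<n. h i * obs_config A i) = (\<Sum>i<n. h i * obs_spin A i)"
    by (intro sum.cong refl) (simp add: obs_config_def)
  show "(\<Sum>j<m. g j * lat_config A j) = (\<Sum>j<m. g j * col_sign j * lat_spin A j)"
    by (intro sum.cong refl) (simp add: lat_config_def)
qed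

lemma col_sign_sq: "col_sign j * col_sign j = 1"
  unfolding col_sign_def by simp

lemma mem_spins_iff: "x \<in> spins k \<longleftrightarrow> (\<forall>i<k. x i = -1 \<or> x i = 1) \<and> (\<forall>i\<ge>k. x i = undefined)"
  unfolding spins_def PiE_iff extensional_def by auto

definition free_sites :: "(nat + nat) set" where
  "free_sites = Inl ` ({..<n} - S) \<union> Inr ` {..<m}"

lemma finite_free_sites: "finite free_sites"
  unfolding free_sites_def by simp

definition spin_set :: "(nat \<Rightarrow> real) \<Rightarrow> (nat \<Rightarrow> real) \<Rightarrow> (nat + nat) set" where
  "spin_set x y = Inl ` {i \<in> {..<n} - S. x i = 1} \<union> Inr ` {j \<in> {..<m}. col_sign j * y j = 1}"

lemma bij_betw_config:
  assumes "S \<subseteq> {..<n}" "\<forall>i\<in>S. xS i \<in> {-1, 1}"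
  shows "bij_betw (\<lambda>A. (obs_config A, lat_config A)) (Pow free_sites)
     ({x\<in>spins n. \<forall>i\<in>S. x i = xS i} \<times> spins m)"
proof -
  have sign: "col_sign j * (if col_sign j * y = 1 then 1 else -1) = y" if "y = -1 \<or> y = 1" for j y
    using that unfolding col_sign_def by auto
  have right: "obs_config (spin_set x y) = x" "lat_config (spin_set x y) = y"
    if "x \<in> spins n" "\<forall>i\<in>S. x i = xS i" "y \<in> spins m" for x y
    using that sign
    unfolding mem_spins_iff obs_config_def obs_spin_def lat_config_def lat_spin_def spin_set_def
    by (auto simp: fun_eq_iff not_less image_iff)
  have left: "spin_set (obs_config A) (lat_config A) = A" if "A \<subseteq> free_sites" for A
    using that
    by (auto simp: spin_set_def free_sites_def obs_config_def obs_spin_def lat_config_def lat_spin_def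
        col_sign_sq mult.assoc[symmetric] split: if_splits)
  have "col_sign j * lat_spin A j = -1 \<or> col_sign j * lat_spin A j = 1" for A j
    unfolding col_sign_def lat_spin_def by simp
  then have image:
      "obs_config A \<in> spins n" "\<forall>i\<in>S. obs_config A i = xS i" "lat_config A \<in> spins m" for A
    using assms unfolding mem_spins_iff by (auto simp: obs_config_def obs_spin_def lat_config_def)
  show ?thesis
  proof (rule bij_betw_byWitness[where f' = "\<lambda>(x, y). spin_set x y"])
    show "\<forall>A\<in>Pow free_sites. (\<lambda>(x, y). spin_set x y) (obs_config A, lat_config A) = A"
      using left by simp
    show "\<forall>p\<in>{x\<in>spins n. \<forall>i\<in>S. x i = xS i} \<times> spins m.
        (\<lambda>A. (obs_config A, lat_config A)) ((\<lambda>(x, y). spin_set x y) p) = p"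
      using right by auto
    show "(\<lambda>A. (obs_config A, lat_config A)) ` Pow free_sites
        \<subseteq> {x\<in>spins n. \<forall>i\<in>S. x i = xS i} \<times> spins m"
      using image by auto
    show "(\<lambda>(x, y). spin_set x y) ` ({x\<in>spins n. \<forall>i\<in>S. x i = xS i} \<times> spins m) \<subseteq> Pow free_sites"
      by (auto simp: spin_set_def free_sites_def)
  qed
qed

lemma sum_config_reindex:
  assumes S: "S \<subseteq> {..<n}" and xs: "\<forall>i\<in>S. xS i \<in> {-1, 1}"
  shows "(\<Sum>x\<in>{x\<in>spins n. \<forall>i\<in>S. x i = xS i}. \<Sum>y\<in>spins m. \<phi> x y)
     = (\<Sum>A\<in>Pow free_sites. \<phi> (obs_config A) (lat_config A))"
proof -
  have "(\<Sum>x\<in>{x\<in>spins n. \<forall>i\<in>S. x i = xS i}. \<Sum>y\<in>spins m. \<phi> x y)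
     = (\<Sum>p\<in>{x\<in>spins n. \<forall>i\<in>S. x i = xS i} \<times> spins m. case_prod \<phi> p)"
    by (rule sum.cartesian_product)
  also have "\<dots> = (\<Sum>A\<in>Pow free_sites. case_prod \<phi> (obs_config A, lat_config A))"
    by (rule sum.reindex_bij_betw[OF bij_betw_config[OF S xs], symmetric])
  finally show ?thesis by simp
qed

lemma rbm_Z_pos: "rbm_Z n m J h g > 0"
proof -
  have fin: "finite (spins k)" for k unfolding spins_def by (intro finite_PiE) auto
  have ne: "spins k \<noteq> {}" for k unfolding spins_def by (simp add: PiE_eq_empty_iff)
  show ?thesis unfolding rbm_Z_def rbm_weight_def
    using fin ne by (intro sum_pos) auto
qed

lemma rbm_cond_exp_eq_config_sum:
  assumes S: "S \<subseteq> {..<n}" and xs: "\<forall>i\<in>S. xS i \<in> {-1, 1}"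
  shows "rbm_cond_exp n m J h g S xS f =
    (\<Sum>A\<in>Pow free_sites. f (obs_config A) * exp (gauged_energy A))
    / (\<Sum>A\<in>Pow free_sites. exp (gauged_energy A))"
proof -
  have Z: "rbm_Z n m J h g \<noteq> 0" using rbm_Z_pos by simp
  let ?X = "{x\<in>spins n. \<forall>i\<in>S. x i = xS i}"
  have num: "(\<Sum>x\<in>?X. \<Sum>y\<in>spins m. f x * rbm_prob n m J h g x y)
     = (\<Sum>x\<in>?X. \<Sum>y\<in>spins m. f x * rbm_weight n m J h g x y) / rbm_Z n m J h g"
    unfolding rbm_prob_def sum_divide_distrib by simp
  have den: "(\<Sum>x\<in>?X. \<Sum>y\<in>spins m. rbm_prob n m J h g x y)
     = (\<Sum>x\<in>?X. \<Sum>y\<in>spins m. rbm_weight n m J h g x y) / rbm_Z n m J h g"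
    unfolding rbm_prob_def sum_divide_distrib by simp
  have s1: "(\<Sum>x\<in>?X. \<Sum>y\<in>spins m. f x * rbm_weight n m J h g x y)
     = (\<Sum>A\<in>Pow free_sites. f (obs_config A) * exp (gauged_energy A))"
    using sum_config_reindex[OF S xs, of "\<lambda>x y. f x * rbm_weight n m J h g x y"]
    unfolding rbm_weight_config .
  have s2: "(\<Sum>x\<in>?X. \<Sum>y\<in>spins m. rbm_weight n m J h g x y)
     = (\<Sum>A\<in>Pow free_sites. exp (gauged_energy A))"
    using sum_config_reindex[OF S xs, of "\<lambda>x y. rbm_weight n m J h g x y"]
    unfolding rbm_weight_config .
  show ?thesis unfolding rbm_cond_exp_def num den s1 s2 using Z by simp
qed

lemma rbm_cond_cov_eq_cov_sum:
  assumes "S \<subseteq> {..<n}" "\<forall>i\<in>S. xS i \<in> {-1, 1}" "u < n" "v < n" "u \<notin> S" "v \<notin> S"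
  shows "rbm_cond_cov n m J h g S xS u v =
    cov_sum (\<lambda>A. exp (gauged_energy A)) free_sites (pm_spin (Inl u)) (pm_spin (Inl v))
    / (\<Sum>A\<in>Pow free_sites. exp (gauged_energy A))^2"
proof -
  have spin: "obs_config A k = pm_spin (Inl k) A" if "k < n" "k \<notin> S" for A k
    using that by (simp add: obs_config_def obs_spin_def pm_spin_def)
  have "(\<Sum>A\<in>Pow free_sites. exp (gauged_energy A)) > 0"
    using finite_free_sites by (intro sum_pos) auto
  thus ?thesis
    unfolding rbm_cond_cov_def rbm_cond_exp_eq_config_sum[OF assms(1,2)] cov_sum_def
      spin[OF assms(3,5)] spin[OF assms(4,6)]
    by (simp add: field_simps power2_eq_square)
qed

lemma cov_sum_gauged_energy_lower_bound:
  assumes lc: "locally_consistent n m J h g a l" and "a > 0" and xs: "\<forall>i\<in>S. xS i \<in> {-1, 1}"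
    and "u < n" "v < n" "u \<notin> S" "v \<notin> S" "u \<noteq> v" "j < m" "J u j \<noteq> 0" "J v j \<noteq> 0"
  defines "\<mu> \<equiv> \<lambda>A. exp (gauged_energy A)"
  shows "a^2 * exp (- (12 * l)) * (\<Sum>A\<in>Pow free_sites. \<mu> A)^2
    \<le> cov_sum \<mu> free_sites (pm_spin (Inl u)) (pm_spin (Inl v))"
proof -
  define I0 where "I0 = free_sites - {Inl u, Inl v, Inr j}"
  have sites: "free_sites = insert (Inl u) (insert (Inl v) (insert (Inr j) I0))"
    unfolding I0_def free_sites_def using assms by auto
  have signs: "\<forall>j<m. (\<forall>i<n. J i j \<ge> 0) \<or> (\<forall>i<n. J i j \<le> 0)"
    using lc unfolding locally_consistent_def by blast
  have "0 \<le> l" using locally_consistent_le[OF lc assms(4,9,10)] assms(2) by linarith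
  have flip: "\<bar>gauged_energy (insert k B) - gauged_energy B\<bar> \<le> 2 * l"
    if "k \<in> {Inl u, Inl v, Inr j}" "k \<notin> B" for k B
    using that assms by (auto intro: energy_flip_obs_bound[OF lc] energy_flip_lat_bound[OF lc xs])
  have interaction: "4 * a \<le> gauged_energy (insert k (insert (Inr j) A)) + gauged_energy A
      - gauged_energy (insert k A) - gauged_energy (insert (Inr j) A)"
    if "k \<in> {Inl u, Inl v}" "k \<notin> A" "Inr j \<notin> A" for k A
    using that assms energy_interaction gauged_coupling_ge[OF lc] by fastforce
  have modular: "gauged_energy (insert (Inl u) (insert (Inl v) B)) + gauged_energy B
      = gauged_energy (insert (Inl u) B) + gauged_energy (insert (Inl v) B)"
    if "Inl u \<notin> B" "Inl v \<notin> B" for B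
    using that assms by (intro energy_modular_obs) auto
  have "finite I0" "Inl u \<notin> I0" "Inl v \<notin> I0" "Inr j \<notin> I0"
    unfolding I0_def using finite_free_sites by auto
  moreover have "Inl u \<noteq> Inl v" "Inl u \<noteq> Inr j" "Inl v \<noteq> Inr j" using assms(8) by auto
  ultimately have "a^2 * exp (- (12 * l))
      * (\<Sum>A\<in>Pow (insert (Inl u) (insert (Inl v) (insert (Inr j) I0))). exp (gauged_energy A))^2
    \<le> cov_sum (\<lambda>A. exp (gauged_energy A)) (insert (Inl u) (insert (Inl v) (insert (Inr j) I0)))
      (pm_spin (Inl u)) (pm_spin (Inl v))"
    using assms(2) \<open>0 \<le> l\<close> energy_supermodular[OF signs] modular interaction flip
    by (rule cov_sum_exp_lower_bound)
  then show ?thesis unfolding sites \<mu>_def .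
qed

end

theorem lemma1:
  fixes n m :: nat and J :: "nat \<Rightarrow> nat \<Rightarrow> real" and h g :: "nat \<Rightarrow> real"
    and alpha lambda :: real and u v :: nat and S :: "nat set" and xS :: "nat \<Rightarrow> real"
  assumes "locally_consistent n m J h g alpha lambda"
    and "alpha > 0"
    and "u < n"
    and "S \<subseteq> {..<n} - {u}"
    and "\<forall>i\<in>S. xS i \<in> {-1, 1}"
    and "v \<in> two_hop n m J u - (S \<union> {u})"
  shows "rbm_cond_cov n m J h g S xS u v \<ge> alpha^2 * exp (-12 * lambda)"
proof -
  have S: "S \<subseteq> {..<n}" "u \<notin> S" using assms(4) by auto
  obtain j where v: "v < n" "v \<notin> S" "u \<noteq> v" and j: "j < m" "J u j \<noteq> 0" "J v j \<noteq> 0"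
    using assms(6) unfolding two_hop_def by auto
  define \<mu> where "\<mu> = (\<lambda>A. exp (gauged_energy n m J h g S xS A))"
  define T where "T = (\<Sum>A\<in>Pow (free_sites n m S). \<mu> A)"
  have "T > 0"
    unfolding T_def \<mu>_def using finite_free_sites by (intro sum_pos) auto
  have "alpha^2 * exp (-12 * lambda) = alpha^2 * exp (- (12 * lambda)) * T^2 / T^2"
    using \<open>T > 0\<close> by simp
  also have "\<dots> \<le> cov_sum \<mu> (free_sites n m S) (pm_spin (Inl u)) (pm_spin (Inl v)) / T^2"
    unfolding T_def \<mu>_def using assms(1,2,3,5) S v j
    by (intro divide_right_mono cov_sum_gauged_energy_lower_bound) auto
  also have "\<dots> = rbm_cond_cov n m J h g S xS u v"
    unfolding T_def \<mu>_def using assms(3,5) S v by (intro rbm_cond_cov_eq_cov_sum[symmetric]) auto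
  finally show ?thesis .
qed

end
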